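(* Let $n\ge1$ and let $T$ be the adjacency matrix of the Kneser graph $K(2n+1,n)$: its rows and columns are indexed by the $n$-element subsets of $\{1,\dots,2n+1\}$, with $(A,B)$ entry $1$ if $A\cap B=\emptyset$ and $0$ otherwise. Let $\mathcal T$ be the commutant of the natural permutation action of $\mathfrak S_{2n+1}$ on these subsets. Then \[\|T\|_m=\|S_T|_{\mathcal T}\|=\frac{2^{2n}}{\binom{2n+1}n}=\frac{4\cdot6\cdots(2n+2)}{3\cdot5\cdots(2n+1)}=\prod_{i=1}^n\Big(1+\frac1{2i+1}\Big)>\frac12\log(2n+3).\]
   Context: For a matrix $T=[t_{AB}]$, $S_T$ denotes the Schur multiplier $R=[r_{AB}]\mapsto[t_{AB}r_{AB}]$ on matrices indexed by the same set (with the operator norm), $\|T\|_m$ its norm, and $\|S_T|_{\mathcal T}\|$ the norm of its restriction to $\mathcal T$. The action is $\sigma\cdot e_A=e_{\sigma(A)}$ on the Hilbert space with orthonormal basis indexed by the $n$-element subsets. *)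

theory Defs
  imports Complex_Main "HOL-Combinatorics.Permutations"
begin

text \<open>Matrices indexed by a finite set I are functions I \<Rightarrow> I \<Rightarrow> complex
  (values outside I are irrelevant); they act on the Hilbert space of functions
  I \<Rightarrow> complex with the l2 norm.\<close>

definition vnorm :: "'a set \<Rightarrow> ('a \<Rightarrow> complex) \<Rightarrow> real" where
  "vnorm I x = sqrt (\<Sum>i\<in>I. (cmod (x i))^2)"

definition mat_apply :: "'a set \<Rightarrow> ('a \<Rightarrow> 'a \<Rightarrow> complex) \<Rightarrow> ('a \<Rightarrow> complex) \<Rightarrow> ('a \<Rightarrow> complex)" where
  "mat_apply I R x = (\<lambda>i. \<Sum>j\<in>I. R i j * x j)"

definition mat_mult :: "'a set \<Rightarrow> ('a \<Rightarrow> 'a \<Rightarrow> complex) \<Rightarrow> ('a \<Rightarrow> 'a \<Rightarrow> complex) \<Rightarrow> ('a \<Rightarrow> 'a \<Rightarrow> complex)" where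
  "mat_mult I R S = (\<lambda>i k. \<Sum>j\<in>I. R i j * S j k)"

definition opnorm :: "'a set \<Rightarrow> ('a \<Rightarrow> 'a \<Rightarrow> complex) \<Rightarrow> real" where
  "opnorm I R = Sup {vnorm I (mat_apply I R x) | x. vnorm I x \<le> 1}"

definition schur :: "('a \<Rightarrow> 'a \<Rightarrow> complex) \<Rightarrow> ('a \<Rightarrow> 'a \<Rightarrow> complex) \<Rightarrow> ('a \<Rightarrow> 'a \<Rightarrow> complex)" where
  "schur T R = (\<lambda>i j. T i j * R i j)"

definition schur_norm_on :: "'a set \<Rightarrow> ('a \<Rightarrow> 'a \<Rightarrow> complex) \<Rightarrow> ('a \<Rightarrow> 'a \<Rightarrow> complex) set \<Rightarrow> real" where
  "schur_norm_on I T Sub = Sup {opnorm I (schur T R) | R. R \<in> Sub \<and> opnorm I R \<le> 1}"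

definition schur_norm :: "'a set \<Rightarrow> ('a \<Rightarrow> 'a \<Rightarrow> complex) \<Rightarrow> real" where
  "schur_norm I T = schur_norm_on I T UNIV"

definition kneser_vertices :: "nat \<Rightarrow> nat set set" where
  "kneser_vertices n = {A. A \<subseteq> {1..2*n+1} \<and> card A = n}"

definition kneser_adj :: "nat set \<Rightarrow> nat set \<Rightarrow> complex" where
  "kneser_adj A B = (if A \<inter> B = {} then 1 else 0)"

text \<open>Permutation matrix of sigma: sigma e_B = e_{sigma(B)}, so entry (A,B) is 1 iff A = sigma ` B.\<close>
definition perm_mat :: "(nat \<Rightarrow> nat) \<Rightarrow> nat set \<Rightarrow> nat set \<Rightarrow> complex" where
  "perm_mat \<sigma> A B = (if A = \<sigma> ` B then 1 else 0)"

definition kneser_commutant :: "nat \<Rightarrow> (nat set \<Rightarrow> nat set \<Rightarrow> complex) set" where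
  "kneser_commutant n = {R. \<forall>\<sigma>. \<sigma> permutes {1..2*n+1} \<longrightarrow>
     (\<forall>A\<in>kneser_vertices n. \<forall>B\<in>kneser_vertices n.
        mat_mult (kneser_vertices n) (perm_mat \<sigma>) R A B = mat_mult (kneser_vertices n) R (perm_mat \<sigma>) A B)}"

end

theory Submission
  imports Defs "HOL-Computational_Algebra.Polynomial" "HOL-Analysis.L2_Norm" "HOL-Analysis.Convex"
begin

text \<open>The Kneser matrix \<open>T\<close> is symmetric and \<open>T\<^sup>2 = B B\<^sup>T\<close>, where \<open>B\<close> is the inclusion matrix
  of the \<open>n\<close>-subsets into the \<open>(n + 1)\<close>-subsets of \<open>{1..2n+1}\<close> (pass to complements).
  Comparing \<open>B B\<^sup>T\<close> with \<open>B\<^sup>T B\<close> level by level yields the trace of every polynomial in \<open>T\<^sup>2\<close>: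
  \<open>|T|\<close> has eigenvalues \<open>n + 1 - j\<close> with multiplicities \<open>C(2n+1, j) - C(2n+1, j-1)\<close>, \<open>j \<le> n\<close>,
  so \<open>tr |T| = \<Sum>\<^sub>j\<^sub>\<le>\<^sub>n C(2n+1, j) = 2\<^sup>2\<^sup>n\<close>. Interpolating on this spectrum writes \<open>Z = |T|\<^sup>1\<^sup>/\<^sup>2\<close> and
  the sign \<open>S = T |T|\<^sup>-\<^sup>1\<close> as polynomials in \<open>T\<^sup>2\<close>, so both are invariant under the symmetric group.
  In the factorisation \<open>T = Z (S Z)\<close> the rows of \<open>Z\<close> and the columns of \<open>S Z\<close> have squared norm equal to
  the diagonal entries of \<open>|T|\<close>, which are all equal by transitivity, hence equal to
  \<open>tr |T| / C(2n+1, n)\<close>; this bounds the Schur multiplier norm. Conversely \<open>S\<close> is an orthogonal matrix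
  in the commutant, and \<open>\<langle>(T \<circ> S) 1, 1\<rangle> = tr (T S) = tr |T|\<close> shows that the bound is attained there.\<close>

type_synonym 'a rmat = "'a \<Rightarrow> 'a \<Rightarrow> real"

text \<open>The product of an \<open>I \<times> J\<close> and a \<open>J \<times> K\<close> matrix is set to zero outside \<open>I \<times> K\<close>,
  so that products carry their support.\<close>

definition rmat_prod :: "'a set \<Rightarrow> 'a set \<Rightarrow> 'a set \<Rightarrow> 'a rmat \<Rightarrow> 'a rmat \<Rightarrow> 'a rmat" where
  "rmat_prod I J K M N = (\<lambda>a b. if a \<in> I \<and> b \<in> K then \<Sum>j\<in>J. M a j * N j b else 0)"

abbreviation rmat_mult :: "'a set \<Rightarrow> 'a rmat \<Rightarrow> 'a rmat \<Rightarrow> 'a rmat" where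
  "rmat_mult I \<equiv> rmat_prod I I I"

definition rmat_id :: "'a set \<Rightarrow> 'a rmat" where
  "rmat_id I = (\<lambda>a b. if a \<in> I \<and> a = b then 1 else 0)"

definition rmat_zero :: "'a rmat" where
  "rmat_zero = (\<lambda>a b. 0)"

definition rmat_add :: "'a rmat \<Rightarrow> 'a rmat \<Rightarrow> 'a rmat" where
  "rmat_add M N = (\<lambda>a b. M a b + N a b)"

definition rmat_scale :: "real \<Rightarrow> 'a rmat \<Rightarrow> 'a rmat" where
  "rmat_scale c M = (\<lambda>a b. c * M a b)"

definition rmat_supported :: "'a set \<Rightarrow> 'a set \<Rightarrow> 'a rmat \<Rightarrow> bool" where
  "rmat_supported I K M \<longleftrightarrow> (\<forall>a b. M a b \<noteq> 0 \<longrightarrow> a \<in> I \<and> b \<in> K)"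

definition rmat_transpose :: "'a rmat \<Rightarrow> 'a rmat" where
  "rmat_transpose M = (\<lambda>a b. M b a)"

definition rmat_trace :: "'a set \<Rightarrow> 'a rmat \<Rightarrow> real" where
  "rmat_trace I M = (\<Sum>a\<in>I. M a a)"

lemma rmat_prod_assoc:
  "rmat_prod I J L (rmat_prod I K J M N) P = rmat_prod I K L M (rmat_prod K J L N P)"
proof (intro ext)
  fix a b
  show "rmat_prod I J L (rmat_prod I K J M N) P a b = rmat_prod I K L M (rmat_prod K J L N P) a b"
  proof (cases "a \<in> I \<and> b \<in> L")
    case True
    have "(\<Sum>j\<in>J. (\<Sum>k\<in>K. M a k * N k j) * P j b) = (\<Sum>j\<in>J. \<Sum>k\<in>K. M a k * N k j * P j b)"
      by (simp add: sum_distrib_right)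
    also have "\<dots> = (\<Sum>k\<in>K. M a k * (\<Sum>j\<in>J. N k j * P j b))"
      by (subst sum.swap) (simp add: sum_distrib_left mult.assoc)
    finally show ?thesis
      using True by (simp add: rmat_prod_def)
  qed (auto simp: rmat_prod_def)
qed

lemma rmat_supported_prod [simp]: "rmat_supported I K (rmat_prod I J K M N)"
  by (auto simp: rmat_supported_def rmat_prod_def)

lemma rmat_supported_id [simp]: "rmat_supported I I (rmat_id I)"
  by (auto simp: rmat_supported_def rmat_id_def)

lemma rmat_supported_zero [simp]: "rmat_supported I K rmat_zero"
  by (simp add: rmat_supported_def rmat_zero_def)

lemma rmat_supported_add [simp]:
  "rmat_supported I K M \<Longrightarrow> rmat_supported I K N \<Longrightarrow> rmat_supported I K (rmat_add M N)"
  unfolding rmat_supported_def rmat_add_def by (metis add.right_neutral)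

lemma rmat_supported_scale [simp]: "rmat_supported I K M \<Longrightarrow> rmat_supported I K (rmat_scale c M)"
  by (auto simp: rmat_supported_def rmat_scale_def)

lemma rmat_prod_id_left: "finite I \<Longrightarrow> rmat_supported I K N \<Longrightarrow> rmat_prod I I K (rmat_id I) N = N"
  unfolding rmat_prod_def rmat_id_def rmat_supported_def
  by (intro ext) (auto simp: if_distrib[of "\<lambda>x. x * _"] cong: if_cong)

lemma rmat_prod_id_right: "finite K \<Longrightarrow> rmat_supported I K N \<Longrightarrow> rmat_prod I K K N (rmat_id K) = N"
  unfolding rmat_prod_def rmat_id_def rmat_supported_def
  by (intro ext) (auto simp: if_distrib[of "\<lambda>x. _ * x"] cong: if_cong)

lemma rmat_prod_zero [simp]: "rmat_prod I J K rmat_zero N = rmat_zero" "rmat_prod I J K N rmat_zero = rmat_zero"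
  by (simp_all add: rmat_prod_def rmat_zero_def fun_eq_iff)

lemma rmat_prod_add_left:
  "rmat_prod I J K (rmat_add M N) P = rmat_add (rmat_prod I J K M P) (rmat_prod I J K N P)"
  by (auto simp: rmat_prod_def rmat_add_def fun_eq_iff sum.distrib algebra_simps)

lemma rmat_prod_add_right:
  "rmat_prod I J K P (rmat_add M N) = rmat_add (rmat_prod I J K P M) (rmat_prod I J K P N)"
  by (auto simp: rmat_prod_def rmat_add_def fun_eq_iff sum.distrib algebra_simps)

lemma rmat_prod_scale_left: "rmat_prod I J K (rmat_scale c M) P = rmat_scale c (rmat_prod I J K M P)"
  by (auto simp: rmat_prod_def rmat_scale_def fun_eq_iff sum_distrib_left algebra_simps)

lemma rmat_prod_scale_right: "rmat_prod I J K P (rmat_scale c M) = rmat_scale c (rmat_prod I J K P M)"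
  by (auto simp: rmat_prod_def rmat_scale_def fun_eq_iff sum_distrib_left algebra_simps)

lemma rmat_add_zero [simp]: "rmat_add rmat_zero M = M" "rmat_add M rmat_zero = M"
  by (simp_all add: rmat_add_def rmat_zero_def)

lemma rmat_add_commute: "rmat_add M N = rmat_add N M"
  by (simp add: rmat_add_def add.commute)

lemma rmat_scale_zero [simp]: "rmat_scale 0 M = rmat_zero" "rmat_scale c rmat_zero = rmat_zero"
  by (simp_all add: rmat_scale_def rmat_zero_def)

lemma rmat_scale_one [simp]: "rmat_scale 1 M = M"
  by (simp add: rmat_scale_def)

lemma rmat_scale_add: "rmat_scale c (rmat_add M N) = rmat_add (rmat_scale c M) (rmat_scale c N)"
  by (simp add: rmat_scale_def rmat_add_def algebra_simps)

lemma rmat_scale_scale: "rmat_scale c (rmat_scale d M) = rmat_scale (c * d) M"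
  by (simp add: rmat_scale_def fun_eq_iff)

lemma rmat_transpose_prod:
  "rmat_transpose (rmat_prod I J K M N) = rmat_prod K J I (rmat_transpose N) (rmat_transpose M)"
  by (auto simp: rmat_transpose_def rmat_prod_def fun_eq_iff mult.commute)

lemma rmat_transpose_add: "rmat_transpose (rmat_add M N) = rmat_add (rmat_transpose M) (rmat_transpose N)"
  by (simp add: rmat_transpose_def rmat_add_def)

lemma rmat_transpose_scale: "rmat_transpose (rmat_scale c M) = rmat_scale c (rmat_transpose M)"
  by (simp add: rmat_transpose_def rmat_scale_def)

lemma rmat_transpose_transpose [simp]: "rmat_transpose (rmat_transpose M) = M"
  by (simp add: rmat_transpose_def)

lemma rmat_transpose_id [simp]: "rmat_transpose (rmat_id I) = rmat_id I"
  by (auto simp: rmat_transpose_def rmat_id_def fun_eq_iff)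

lemma rmat_trace_prod_commute: "rmat_trace I (rmat_prod I J I A B) = rmat_trace J (rmat_prod J I J B A)"
  unfolding rmat_trace_def rmat_prod_def by (simp add: sum.swap[of _ I J] mult.commute)

lemma rmat_trace_add: "rmat_trace I (rmat_add M N) = rmat_trace I M + rmat_trace I N"
  by (simp add: rmat_trace_def rmat_add_def sum.distrib)

lemma rmat_trace_scale: "rmat_trace I (rmat_scale c M) = c * rmat_trace I M"
  by (simp add: rmat_trace_def rmat_scale_def sum_distrib_left)

lemma rmat_trace_id: "rmat_trace I (rmat_id I) = real (card I)"
  by (simp add: rmat_trace_def rmat_id_def)

lemma sum_square_row: "a \<in> I \<Longrightarrow> (\<Sum>c\<in>I. (M a c)\<^sup>2) = rmat_mult I M (rmat_transpose M) a a"
  by (simp add: rmat_prod_def rmat_transpose_def power2_eq_square)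

lemma sum_square_column: "b \<in> I \<Longrightarrow> (\<Sum>c\<in>I. (M c b)\<^sup>2) = rmat_mult I (rmat_transpose M) M b b"
  by (simp add: rmat_prod_def rmat_transpose_def power2_eq_square)

lemma rmat_eq_0_if_trace_square_eq_0:
  assumes "finite I" "rmat_supported I I P" "rmat_transpose P = P" "rmat_trace I (rmat_mult I P P) = 0"
  shows "P = rmat_zero"
proof (intro ext)
  fix a b
  have sym: "P x y = P y x" for x y
    using fun_cong[OF fun_cong[OF assms(3)], of y x] by (simp add: rmat_transpose_def)
  have "rmat_trace I (rmat_mult I P P) = (\<Sum>x\<in>I. \<Sum>y\<in>I. (P x y)\<^sup>2)"
    unfolding rmat_trace_def rmat_prod_def by (intro sum.cong refl) (auto simp: power2_eq_square sym)
  then have "(\<Sum>x\<in>I. \<Sum>y\<in>I. (P x y)\<^sup>2) = 0"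
    using assms(4) by simp
  then have "\<forall>x\<in>I. (\<Sum>y\<in>I. (P x y)\<^sup>2) = 0"
    using assms(1) by (subst (asm) sum_nonneg_eq_0_iff) (auto intro: sum_nonneg)
  then have "\<forall>x\<in>I. \<forall>y\<in>I. (P x y)\<^sup>2 = 0"
    using assms(1) by (simp add: sum_nonneg_eq_0_iff)
  moreover have "P a b = 0" if "a \<notin> I \<or> b \<notin> I"
    using assms(2) that unfolding rmat_supported_def by blast
  ultimately show "P a b = rmat_zero a b"
    unfolding rmat_zero_def by fastforce
qed

definition rmat_poly :: "'a set \<Rightarrow> real poly \<Rightarrow> 'a rmat \<Rightarrow> 'a rmat" where
  "rmat_poly I p M = fold_coeffs (\<lambda>c P. rmat_add (rmat_scale c (rmat_id I)) (rmat_mult I M P)) p rmat_zero"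

lemma rmat_poly_0 [simp]: "rmat_poly I 0 M = rmat_zero"
  by (simp add: rmat_poly_def)

lemma rmat_poly_pCons:
  "rmat_poly I (pCons a p) M = rmat_add (rmat_scale a (rmat_id I)) (rmat_mult I M (rmat_poly I p M))"
proof (cases "p = 0 \<and> a = 0")
  case False
  then show ?thesis
    by (auto simp: rmat_poly_def fold_coeffs_pCons_coeff_not_0_eq fold_coeffs_pCons_not_0_0_eq)
qed simp

lemma rmat_supported_poly [simp]: "rmat_supported I I (rmat_poly I p M)"
  by (induct p) (simp_all add: rmat_poly_pCons)

lemma rmat_poly_const: "rmat_poly I [:c:] M = rmat_scale c (rmat_id I)"
  by (simp add: rmat_poly_pCons)

lemma rmat_poly_1: "rmat_poly I 1 M = rmat_id I"
  by (simp add: one_pCons rmat_poly_const)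

lemma rmat_poly_X: "finite I \<Longrightarrow> rmat_supported I I M \<Longrightarrow> rmat_poly I [:0, 1:] M = M"
  by (simp add: rmat_poly_pCons rmat_poly_const rmat_prod_id_right)

lemma rmat_poly_add: "rmat_poly I (p + q) M = rmat_add (rmat_poly I p M) (rmat_poly I q M)"
proof (induct p arbitrary: q)
  case (pCons a p)
  obtain b q' where "q = pCons b q'"
    by (cases q)
  then show ?case
    by (simp add: rmat_poly_pCons rmat_prod_add_right pCons)
      (simp add: rmat_add_def rmat_scale_def algebra_simps)
qed simp

lemma rmat_poly_smult: "rmat_poly I (smult c p) M = rmat_scale c (rmat_poly I p M)"
  by (induct p) (simp_all add: rmat_poly_pCons rmat_scale_add rmat_scale_scale rmat_prod_scale_right)

lemma rmat_poly_diff: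
  "rmat_poly I (p - q) M = rmat_add (rmat_poly I p M) (rmat_scale (-1) (rmat_poly I q M))"
proof -
  have "rmat_poly I (p - q) M = rmat_poly I (p + smult (-1) q) M"
    by simp
  then show ?thesis
    by (simp only: rmat_poly_add rmat_poly_smult)
qed

lemma rmat_poly_mult:
  assumes "finite I"
  shows "rmat_poly I (p * q) M = rmat_mult I (rmat_poly I p M) (rmat_poly I q M)"
proof (induct p)
  case (pCons a p)
  have "rmat_poly I (pCons a p * q) M
      = rmat_add (rmat_scale a (rmat_poly I q M)) (rmat_mult I M (rmat_mult I (rmat_poly I p M) (rmat_poly I q M)))"
    by (simp add: rmat_poly_add rmat_poly_smult rmat_poly_pCons[of _ 0] pCons)
  then show ?case
    using assms by (simp add: rmat_poly_pCons rmat_prod_add_left rmat_prod_scale_left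
        rmat_prod_id_left rmat_prod_assoc)
qed simp

lemma rmat_poly_commute:
  assumes "finite I" "rmat_supported I I M" "rmat_mult I M N = rmat_mult I N M"
  shows "rmat_mult I M (rmat_poly I p N) = rmat_mult I (rmat_poly I p N) M"
proof (induct p)
  case (pCons a p)
  have "rmat_mult I M (rmat_mult I N (rmat_poly I p N))
      = rmat_mult I N (rmat_mult I (rmat_poly I p N) M)"
    by (simp add: rmat_prod_assoc[symmetric] assms(3)) (simp add: rmat_prod_assoc pCons)
  then show ?case
    using assms(1,2) by (simp add: rmat_poly_pCons rmat_prod_add_left rmat_prod_add_right
        rmat_prod_scale_left rmat_prod_scale_right rmat_prod_id_left rmat_prod_id_right rmat_prod_assoc)
qed simp

lemma rmat_transpose_poly:
  assumes "finite I" "rmat_supported I I M" "rmat_transpose M = M"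
  shows "rmat_transpose (rmat_poly I p M) = rmat_poly I p M"
proof (induct p)
  case 0
  then show ?case
    by (simp add: rmat_transpose_def rmat_zero_def)
next
  case (pCons a p)
  then show ?case
    using rmat_poly_commute[OF assms(1,2) refl, of p]
    by (simp add: rmat_poly_pCons rmat_transpose_add rmat_transpose_scale rmat_transpose_prod assms(3))
qed

lemma rmat_poly_intertwine:
  assumes "finite I" "finite J" "rmat_supported J I B"
  shows "rmat_prod J I I B (rmat_poly I f (rmat_prod I J I A B))
       = rmat_prod J J I (rmat_poly J f (rmat_prod J I J B A)) B"
proof (induct f)
  case (pCons a f)
  have "rmat_prod J I I B (rmat_mult I (rmat_prod I J I A B) (rmat_poly I f (rmat_prod I J I A B)))
      = rmat_prod J J I (rmat_mult J (rmat_prod J I J B A) (rmat_poly J f (rmat_prod J I J B A))) B"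
    by (simp add: rmat_prod_assoc) (simp add: rmat_prod_assoc[symmetric] pCons)
  then show ?case
    using assms by (simp add: rmat_poly_pCons rmat_prod_add_left rmat_prod_add_right
        rmat_prod_scale_left rmat_prod_scale_right rmat_prod_id_left rmat_prod_id_right)
qed simp

lemma rmat_trace_poly_prod_commute:
  assumes "finite I" "finite J" "rmat_supported J I B"
  shows "rmat_trace I (rmat_poly I f (rmat_prod I J I A B))
       = rmat_trace J (rmat_poly J f (rmat_prod J I J B A)) + poly f 0 * (real (card I) - real (card J))"
proof (cases f)
  case (pCons a g)
  have "rmat_trace I (rmat_mult I (rmat_prod I J I A B) (rmat_poly I g (rmat_prod I J I A B)))
      = rmat_trace J (rmat_prod J I J (rmat_prod J I I B (rmat_poly I g (rmat_prod I J I A B))) A)"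
    by (simp add: rmat_prod_assoc rmat_trace_prod_commute)
  also have "\<dots> = rmat_trace J (rmat_mult J (rmat_prod J I J B A) (rmat_poly J g (rmat_prod J I J B A)))"
    by (simp add: rmat_poly_intertwine[OF assms] rmat_prod_assoc rmat_trace_prod_commute[of J J])
  finally show ?thesis
    by (simp add: pCons rmat_poly_pCons rmat_trace_add rmat_trace_scale rmat_trace_id algebra_simps)
qed

lemma rmat_poly_shift:
  assumes "finite I" "rmat_supported I I M"
  shows "rmat_poly I f (rmat_add M (rmat_scale c (rmat_id I))) = rmat_poly I (pcompose f [:c, 1:]) M"
proof (induct f)
  case (pCons a f)
  have "rmat_poly I [:c, 1:] M = rmat_add M (rmat_scale c (rmat_id I))"
    using assms by (simp add: rmat_poly_pCons rmat_poly_const rmat_prod_id_right rmat_add_commute)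
  then have "rmat_poly I (pcompose (pCons a f) [:c, 1:]) M
      = rmat_add (rmat_scale a (rmat_id I))
          (rmat_mult I (rmat_add M (rmat_scale c (rmat_id I))) (rmat_poly I (pcompose f [:c, 1:]) M))"
    using assms(1) by (simp only: pcompose_pCons rmat_poly_add rmat_poly_const rmat_poly_mult)
  then show ?case
    by (simp add: rmat_poly_pCons pCons)
qed simp

lemma rmat_poly_singleton: "rmat_poly {a} f M a a = poly f (M a a)"
  by (induct f) (auto simp: rmat_poly_pCons rmat_add_def rmat_scale_def rmat_id_def rmat_prod_def rmat_zero_def)

lemma rmat_poly_eq_0_if_trace_square_eq_0:
  assumes "finite I" "rmat_supported I I M" "rmat_transpose M = M"
    and "rmat_trace I (rmat_poly I (f * f) M) = 0"
  shows "rmat_poly I f M = rmat_zero"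
  using assms by (intro rmat_eq_0_if_trace_square_eq_0) (simp_all add: rmat_transpose_poly rmat_poly_mult)

definition lagrange_poly :: "nat \<Rightarrow> (nat \<Rightarrow> 'a::field) \<Rightarrow> (nat \<Rightarrow> 'a) \<Rightarrow> 'a poly" where
  "lagrange_poly n x y = (\<Sum>j\<le>n. smult (y j / (\<Prod>i\<in>{..n} - {j}. x j - x i)) (\<Prod>i\<in>{..n} - {j}. [:- x i, 1:]))"

lemma poly_lagrange_poly:
  assumes "inj_on x {..n}" "k \<le> n"
  shows "poly (lagrange_poly n x y) (x k) = y k"
proof -
  have "poly (lagrange_poly n x y) (x k)
      = (\<Sum>j\<le>n. y j / (\<Prod>i\<in>{..n} - {j}. x j - x i) * (\<Prod>i\<in>{..n} - {j}. x k - x i))"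
    by (simp add: lagrange_poly_def poly_sum poly_prod)
  also have "\<dots> = (\<Sum>j\<in>{k}. y j / (\<Prod>i\<in>{..n} - {j}. x j - x i) * (\<Prod>i\<in>{..n} - {j}. x k - x i))"
    using assms(2) by (intro sum.mono_neutral_right) (auto intro: prod_zero)
  also have "\<dots> = y k"
    using assms by (auto simp: inj_on_def)
  finally show ?thesis .
qed

section \<open>Inclusion matrices between consecutive levels of the Boolean lattice\<close>

definition level :: "nat \<Rightarrow> nat \<Rightarrow> nat set set" where
  "level v k = {A. A \<subseteq> {1..v} \<and> card A = k}"

definition inclusion_rmat :: "nat \<Rightarrow> nat \<Rightarrow> nat set rmat" where
  "inclusion_rmat v k = (\<lambda>A B. if A \<in> level v k \<and> B \<in> level v (Suc k) \<and> A \<subseteq> B then 1 else 0)"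

definition up_down :: "nat \<Rightarrow> nat \<Rightarrow> nat set rmat" where
  "up_down v k = rmat_prod (level v k) (level v (Suc k)) (level v k)
     (inclusion_rmat v k) (rmat_transpose (inclusion_rmat v k))"

definition down_up :: "nat \<Rightarrow> nat \<Rightarrow> nat set rmat" where
  "down_up v k = rmat_prod (level v (Suc k)) (level v k) (level v (Suc k))
     (rmat_transpose (inclusion_rmat v k)) (inclusion_rmat v k)"

lemma finite_level [simp]: "finite (level v k)"
  unfolding level_def by (rule finite_subset[of _ "Pow {1..v}"]) auto

lemma card_level: "card (level v k) = v choose k"
  unfolding level_def using n_subsets[of "{1..v}" k] by simp

lemma level_0: "level v 0 = {{}}"
  by (auto simp: level_def card_eq_0_iff dest: finite_subset[OF _ finite_atLeastAtMost])

lemma rmat_supported_inclusion [simp]: "rmat_supported (level v k) (level v (Suc k)) (inclusion_rmat v k)"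
  by (auto simp: rmat_supported_def inclusion_rmat_def)

lemma up_down_entry:
  assumes "A \<in> level v k" "B \<in> level v k"
  shows "up_down v k A B = real (card {C \<in> level v (Suc k). A \<union> B \<subseteq> C})"
proof -
  have "up_down v k A B = (\<Sum>C\<in>level v (Suc k). if A \<union> B \<subseteq> C then 1 else 0)"
    using assms by (auto simp: up_down_def rmat_prod_def inclusion_rmat_def rmat_transpose_def intro!: sum.cong)
  then show ?thesis
    by (simp add: sum.inter_filter[symmetric])
qed

lemma down_up_entry:
  assumes "A \<in> level v (Suc k)" "B \<in> level v (Suc k)"
  shows "down_up v k A B = real (card {C \<in> level v k. C \<subseteq> A \<inter> B})"
proof -
  have "down_up v k A B = (\<Sum>C\<in>level v k. if C \<subseteq> A \<inter> B then 1 else 0)"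
    using assms by (auto simp: down_up_def rmat_prod_def inclusion_rmat_def rmat_transpose_def intro!: sum.cong)
  then show ?thesis
    by (simp add: sum.inter_filter[symmetric])
qed

lemma card_supersets:
  assumes "finite S" "U \<subseteq> S"
  shows "card {C. U \<subseteq> C \<and> C \<subseteq> S \<and> card C = card U + j} = card (S - U) choose j"
proof -
  have fin: "finite U"
    using assms finite_subset by blast
  have "{C. U \<subseteq> C \<and> C \<subseteq> S \<and> card C = card U + j} = (\<lambda>D. U \<union> D) ` {D. D \<subseteq> S - U \<and> card D = j}"
  proof (intro equalityI subsetI)
    fix C
    assume C: "C \<in> {C. U \<subseteq> C \<and> C \<subseteq> S \<and> card C = card U + j}"
    then have "card (C - U) = j"
      using fin by (simp add: card_Diff_subset)
    then show "C \<in> (\<lambda>D. U \<union> D) ` {D. D \<subseteq> S - U \<and> card D = j}"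
      using C by (intro image_eqI[of _ _ "C - U"]) auto
  next
    fix C
    assume "C \<in> (\<lambda>D. U \<union> D) ` {D. D \<subseteq> S - U \<and> card D = j}"
    then obtain D where D: "D \<subseteq> S - U" "card D = j" "C = U \<union> D"
      by blast
    have "finite D" "U \<inter> D = {}"
      using assms(1) D(1) finite_subset by blast+
    then show "C \<in> {C. U \<subseteq> C \<and> C \<subseteq> S \<and> card C = card U + j}"
      using assms(2) fin D by (auto simp: card_Un_disjoint)
  qed
  moreover have "inj_on (\<lambda>D. U \<union> D) {D. D \<subseteq> S - U \<and> card D = j}"
    by (auto simp: inj_on_def)
  ultimately show ?thesis
    using assms by (simp add: card_image n_subsets)
qed

lemma card_level_supersets:
  assumes "U \<subseteq> {1..v}"
  shows "card {C \<in> level v r. U \<subseteq> C} = (if card U \<le> r then (v - card U) choose (r - card U) else 0)"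
proof (cases "card U \<le> r")
  case True
  have "{C \<in> level v r. U \<subseteq> C} = {C. U \<subseteq> C \<and> C \<subseteq> {1..v} \<and> card C = card U + (r - card U)}"
    using True by (auto simp: level_def)
  then show ?thesis
    using True assms card_supersets[of "{1..v}" U "r - card U"] by (simp add: card_Diff_subset finite_subset)
next
  case False
  then have "{C \<in> level v r. U \<subseteq> C} = {}"
    by (auto simp: level_def) (meson card_mono finite_atLeastAtMost finite_subset)
  then show ?thesis
    using False by simp
qed

lemma card_level_subsets:
  assumes "W \<subseteq> {1..v}"
  shows "card {C \<in> level v k. C \<subseteq> W} = card W choose k"
proof -
  have "{C \<in> level v k. C \<subseteq> W} = {C. C \<subseteq> W \<and> card C = k}"
    using assms by (auto simp: level_def)
  then show ?thesis
    using assms by (simp add: n_subsets finite_subset)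
qed

lemma up_down_Suc_entry:
  assumes A: "A \<in> level v (Suc k)" and B: "B \<in> level v (Suc k)"
  shows "up_down v (Suc k) A B = down_up v k A B + (if A = B then real v - 2 * real (Suc k) else 0)"
proof -
  have AB: "A \<subseteq> {1..v}" "B \<subseteq> {1..v}" "finite A" "finite B" "card A = Suc k" "card B = Suc k"
    using A B by (auto simp: level_def intro: finite_subset)
  have "Suc k \<le> v"
    using AB card_mono[of "{1..v}" A] by simp
  show ?thesis
  proof (cases "A = B")
    case True
    then show ?thesis
      using A B AB \<open>Suc k \<le> v\<close>
      by (simp add: up_down_entry down_up_entry card_level_supersets card_level_subsets of_nat_diff)
  next
    case False
    let ?u = "card (A \<union> B)" and ?i = "card (A \<inter> B)"
    have sum: "?u + ?i = 2 * Suc k"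
      using card_Un_Int[of A B] AB by simp
    have "card A < ?u"
      using False AB by (intro psubset_card_mono) (auto dest: card_subset_eq)
    have "A \<union> B \<subseteq> {1..v}" "A \<inter> B \<subseteq> {1..v}"
      using AB by auto
    then have "up_down v (Suc k) A B = real (if ?u \<le> Suc (Suc k) then (v - ?u) choose (Suc (Suc k) - ?u) else 0)"
      "down_up v k A B = real (?i choose k)"
      using A B by (simp_all only: up_down_entry down_up_entry card_level_supersets card_level_subsets)
    moreover have "?u \<le> Suc (Suc k) \<longleftrightarrow> ?u = Suc (Suc k)" "?u = Suc (Suc k) \<longleftrightarrow> ?i = k" "?i \<le> k"
      using sum AB \<open>card A < ?u\<close> by arith+
    then have "(if ?u \<le> Suc (Suc k) then (v - ?u) choose (Suc (Suc k) - ?u) else 0) = ?i choose k"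
      by (auto simp: binomial_eq_0)
    ultimately show ?thesis
      using False by simp
  qed
qed

lemma up_down_Suc:
  "up_down v (Suc k) = rmat_add (down_up v k) (rmat_scale (real v - 2 * real (Suc k)) (rmat_id (level v (Suc k))))"
proof (intro ext)
  fix A B
  show "up_down v (Suc k) A B
      = rmat_add (down_up v k) (rmat_scale (real v - 2 * real (Suc k)) (rmat_id (level v (Suc k)))) A B"
  proof (cases "A \<in> level v (Suc k) \<and> B \<in> level v (Suc k)")
    case True
    then show ?thesis
      by (simp add: up_down_Suc_entry rmat_add_def rmat_scale_def rmat_id_def)
  next
    case False
    then show ?thesis
      by (auto simp: up_down_def down_up_def rmat_prod_def rmat_add_def rmat_scale_def rmat_id_def)
  qed
qed

definition up_down_eigenvalue :: "nat \<Rightarrow> nat \<Rightarrow> nat \<Rightarrow> real" where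
  "up_down_eigenvalue v k j = (real k + 1 - real j) * (real v - real k - real j)"

definition up_down_multiplicity :: "nat \<Rightarrow> nat \<Rightarrow> real" where
  "up_down_multiplicity v j = real (v choose j) - (if j = 0 then 0 else real (v choose (j - 1)))"

text \<open>By induction on \<open>k\<close>: \<open>up_down v (k + 1)\<close> is \<open>down_up v k\<close> shifted by a multiple of the identity,
  and \<open>f (B\<^sup>T B)\<close> and \<open>f (B B\<^sup>T)\<close> have the same trace up to \<open>f 0\<close> times the difference of the
  level sizes.\<close>

lemma rmat_trace_poly_up_down:
  "rmat_trace (level v k) (rmat_poly (level v k) f (up_down v k))
     = (\<Sum>j\<le>k. poly f (up_down_eigenvalue v k j) * up_down_multiplicity v j)"
proof (induct k arbitrary: f)
  case 0
  have "up_down v 0 {} {} = real v"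
    using up_down_entry[of "{}" v 0 "{}"] card_level[of v 1] by (simp add: level_0)
  then show ?case
    by (simp add: level_0 rmat_trace_def rmat_poly_singleton up_down_eigenvalue_def up_down_multiplicity_def)
next
  case (Suc k)
  let ?c = "real v - 2 * real (Suc k)"
  let ?g = "pcompose f [:?c, 1:]"
  have "rmat_trace (level v (Suc k)) (rmat_poly (level v (Suc k)) f (up_down v (Suc k)))
      = rmat_trace (level v (Suc k)) (rmat_poly (level v (Suc k)) ?g (down_up v k))"
    by (simp add: up_down_Suc rmat_poly_shift down_up_def)
  also have "\<dots> = rmat_trace (level v k) (rmat_poly (level v k) ?g (up_down v k))
      + poly ?g 0 * (real (card (level v (Suc k))) - real (card (level v k)))"
    unfolding down_up_def up_down_def by (rule rmat_trace_poly_prod_commute) auto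
  also have "\<dots> = (\<Sum>j\<le>Suc k. poly f (up_down_eigenvalue v (Suc k) j) * up_down_multiplicity v j)"
    by (simp add: Suc card_level up_down_multiplicity_def poly_pcompose up_down_eigenvalue_def algebra_simps)
  finally show ?case .
qed

lemma sum_up_down_multiplicity: "(\<Sum>j\<le>k. up_down_multiplicity v j) = real (v choose k)"
  by (induct k) (auto simp: up_down_multiplicity_def)

lemma weighted_sum_up_down_multiplicity:
  "(\<Sum>j\<le>k. (real k + 1 - real j) * up_down_multiplicity v j) = (\<Sum>j\<le>k. real (v choose j))"
proof (induct k)
  case (Suc k)
  have "(\<Sum>j\<le>Suc k. (real (Suc k) + 1 - real j) * up_down_multiplicity v j)
      = (\<Sum>j\<le>Suc k. (real k + 1 - real j) * up_down_multiplicity v j) + (\<Sum>j\<le>Suc k. up_down_multiplicity v j)"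
    by (simp add: sum.distrib[symmetric] algebra_simps)
  also have "(\<Sum>j\<le>Suc k. (real k + 1 - real j) * up_down_multiplicity v j)
      = (\<Sum>j\<le>k. (real k + 1 - real j) * up_down_multiplicity v j)"
    by simp
  finally show ?case
    by (simp only: Suc sum_up_down_multiplicity sum.atMost_Suc[of _ k]) (simp add: up_down_multiplicity_def)
qed (simp add: up_down_multiplicity_def)

section \<open>The Kneser matrix and its polar decomposition\<close>

text \<open>From here on \<open>2 * n + 1\<close> is written as its simp normal form \<open>Suc (2 * n)\<close>.\<close>

lemma kneser_vertices_eq_level: "kneser_vertices n = level (Suc (2 * n)) n"
  by (simp add: kneser_vertices_def level_def)

lemma finite_kneser_vertices [simp]: "finite (kneser_vertices n)"
  by (simp add: kneser_vertices_eq_level)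

lemma card_kneser_vertices: "card (kneser_vertices n) = (2 * n + 1) choose n"
  by (simp add: kneser_vertices_eq_level card_level)

definition kneser_rmat :: "nat \<Rightarrow> nat set rmat" where
  "kneser_rmat n = (\<lambda>A B. if A \<in> kneser_vertices n \<and> B \<in> kneser_vertices n \<and> A \<inter> B = {} then 1 else 0)"

lemma rmat_supported_kneser [simp]: "rmat_supported (kneser_vertices n) (kneser_vertices n) (kneser_rmat n)"
  by (auto simp: rmat_supported_def kneser_rmat_def)

lemma rmat_transpose_kneser [simp]: "rmat_transpose (kneser_rmat n) = kneser_rmat n"
  by (auto simp: rmat_transpose_def kneser_rmat_def fun_eq_iff)

lemma bij_betw_complement_kneser_vertices:
  "bij_betw (\<lambda>C. {1..2 * n + 1} - C) (kneser_vertices n) (level (Suc (2 * n)) (Suc n))"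
proof (rule bij_betw_byWitness[where f' = "\<lambda>C. {1..2 * n + 1} - C"])
  let ?S = "{1..2 * n + 1}"
  have card_compl: "card (?S - C) = 2 * n + 1 - card C" if "C \<subseteq> ?S" for C
    using that by (subst card_Diff_subset) (auto intro: finite_subset)
  show "(\<lambda>C. ?S - C) ` kneser_vertices n \<subseteq> level (Suc (2 * n)) (Suc n)"
  proof
    fix D
    assume "D \<in> (\<lambda>C. ?S - C) ` kneser_vertices n"
    then obtain C where "C \<subseteq> ?S" "card C = n" "D = ?S - C"
      by (auto simp: kneser_vertices_def)
    then show "D \<in> level (Suc (2 * n)) (Suc n)"
      using card_compl[of C] by (simp add: level_def)
  qed
  show "(\<lambda>C. ?S - C) ` level (Suc (2 * n)) (Suc n) \<subseteq> kneser_vertices n"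
  proof
    fix D
    assume "D \<in> (\<lambda>C. ?S - C) ` level (Suc (2 * n)) (Suc n)"
    then obtain C where "C \<subseteq> ?S" "card C = Suc n" "D = ?S - C"
      by (auto simp: level_def)
    then show "D \<in> kneser_vertices n"
      using card_compl[of C] by (simp add: kneser_vertices_def)
  qed
qed (auto simp: kneser_vertices_eq_level level_def)

lemma kneser_square: "rmat_mult (kneser_vertices n) (kneser_rmat n) (kneser_rmat n) = up_down (Suc (2 * n)) n"
proof (intro ext)
  fix A B
  let ?V = "kneser_vertices n" and ?S = "{1..2 * n + 1}"
  show "rmat_mult ?V (kneser_rmat n) (kneser_rmat n) A B = up_down (Suc (2 * n)) n A B"
  proof (cases "A \<in> ?V \<and> B \<in> ?V")
    case True
    then have "A \<subseteq> ?S" "B \<subseteq> ?S"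
      by (auto simp: kneser_vertices_def)
    have "up_down (Suc (2 * n)) n A B
        = (\<Sum>D\<in>level (Suc (2 * n)) (Suc n). (if A \<subseteq> D then 1 else 0) * (if B \<subseteq> D then 1 else 0))"
      using True by (auto simp: up_down_def rmat_prod_def inclusion_rmat_def rmat_transpose_def
          kneser_vertices_eq_level intro!: sum.cong)
    also have "\<dots> = (\<Sum>C\<in>?V. (if A \<subseteq> ?S - C then 1 else 0) * (if B \<subseteq> ?S - C then 1 else 0))"
      by (rule sum.reindex_bij_betw[OF bij_betw_complement_kneser_vertices, symmetric])
    also have "\<dots> = rmat_mult ?V (kneser_rmat n) (kneser_rmat n) A B"
      using True \<open>A \<subseteq> ?S\<close> \<open>B \<subseteq> ?S\<close> unfolding rmat_prod_def kneser_rmat_def by (auto intro!: sum.cong)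
    finally show ?thesis
      by simp
  next
    case False
    then show ?thesis
      by (auto simp: up_down_def rmat_prod_def kneser_vertices_eq_level)
  qed
qed

abbreviation kneser_poly :: "nat \<Rightarrow> real poly \<Rightarrow> nat set rmat" where
  "kneser_poly n f \<equiv> rmat_poly (kneser_vertices n) f (up_down (Suc (2 * n)) n)"

lemma rmat_supported_up_down [simp]: "rmat_supported (level v k) (level v k) (up_down v k)"
  by (simp add: up_down_def)

lemma rmat_transpose_up_down [simp]: "rmat_transpose (up_down v k) = up_down v k"
  by (simp add: up_down_def rmat_transpose_prod)

lemma rmat_transpose_kneser_poly: "rmat_transpose (kneser_poly n f) = kneser_poly n f"
  by (rule rmat_transpose_poly) (simp_all add: kneser_vertices_eq_level)

lemma kneser_commute_poly:
  "rmat_mult (kneser_vertices n) (kneser_rmat n) (kneser_poly n f)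
     = rmat_mult (kneser_vertices n) (kneser_poly n f) (kneser_rmat n)"
proof (rule rmat_poly_commute)
  show "rmat_mult (kneser_vertices n) (kneser_rmat n) (up_down (Suc (2 * n)) n)
      = rmat_mult (kneser_vertices n) (up_down (Suc (2 * n)) n) (kneser_rmat n)"
    unfolding kneser_square[symmetric] by (simp add: rmat_prod_assoc)
qed simp_all

lemma rmat_trace_kneser_poly:
  "rmat_trace (kneser_vertices n) (kneser_poly n f)
     = (\<Sum>j\<le>n. poly f ((real n + 1 - real j)\<^sup>2) * up_down_multiplicity (Suc (2 * n)) j)"
  unfolding kneser_vertices_eq_level rmat_trace_poly_up_down
  by (intro sum.cong refl) (simp add: up_down_eigenvalue_def power2_eq_square algebra_simps)

lemma kneser_poly_eqI:
  assumes "\<And>j. j \<le> n \<Longrightarrow> poly f ((real n + 1 - real j)\<^sup>2) = poly g ((real n + 1 - real j)\<^sup>2)"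
  shows "kneser_poly n f = kneser_poly n g"
proof -
  have "rmat_trace (kneser_vertices n) (kneser_poly n ((f - g) * (f - g))) = 0"
    unfolding rmat_trace_kneser_poly using assms by simp
  then have "kneser_poly n (f - g) = rmat_zero"
    by (intro rmat_poly_eq_0_if_trace_square_eq_0) (simp_all add: kneser_vertices_eq_level)
  then show ?thesis
    by (simp add: rmat_poly_diff rmat_add_def rmat_scale_def rmat_zero_def fun_eq_iff)
qed

lemma poly_lagrange_kneser:
  assumes "j \<le> n"
  shows "poly (lagrange_poly n (\<lambda>j. (real n + 1 - real j)\<^sup>2) y) ((real n + 1 - real j)\<^sup>2) = y j"
proof (rule poly_lagrange_poly[OF _ assms])
  show "inj_on (\<lambda>j. (real n + 1 - real j)\<^sup>2) {..n}"
    by (auto simp: inj_on_def power2_eq_iff)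
qed

lemma rmat_trace_kneser_abs:
  assumes "\<And>j. j \<le> n \<Longrightarrow> poly f ((real n + 1 - real j)\<^sup>2) = real n + 1 - real j"
  shows "rmat_trace (kneser_vertices n) (kneser_poly n f) = 2 ^ (2 * n)"
proof -
  have "rmat_trace (kneser_vertices n) (kneser_poly n f)
      = (\<Sum>j\<le>n. (real n + 1 - real j) * up_down_multiplicity (Suc (2 * n)) j)"
    unfolding rmat_trace_kneser_poly using assms by simp
  also have "\<dots> = real (\<Sum>j\<le>n. (2 * n + 1) choose j)"
    by (simp add: weighted_sum_up_down_multiplicity)
  also have "\<dots> = 2 ^ (2 * n)"
    unfolding binomial_r_part_sum by simp
  finally show ?thesis .
qed

text \<open>The square root \<open>|T|\<^sup>1\<^sup>/\<^sup>2\<close> and the sign \<open>T |T|\<^sup>-\<^sup>1\<close> of the Kneser matrix \<open>T\<close>, as polynomials in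
  \<open>T\<^sup>2\<close> interpolating on its spectrum.\<close>

definition kneser_abs_sqrt :: "nat \<Rightarrow> nat set rmat" where
  "kneser_abs_sqrt n =
     kneser_poly n (lagrange_poly n (\<lambda>j. (real n + 1 - real j)\<^sup>2) (\<lambda>j. sqrt (real n + 1 - real j)))"

definition kneser_sign :: "nat \<Rightarrow> nat set rmat" where
  "kneser_sign n = rmat_mult (kneser_vertices n) (kneser_rmat n)
     (kneser_poly n (lagrange_poly n (\<lambda>j. (real n + 1 - real j)\<^sup>2) (\<lambda>j. 1 / (real n + 1 - real j))))"

lemma kneser_mult_poly:
  "rmat_mult (kneser_vertices n) (kneser_poly n f) (kneser_poly n g) = kneser_poly n (f * g)"
  by (simp add: rmat_poly_mult)

lemma kneser_square_mult_poly:
  "rmat_mult (kneser_vertices n) (kneser_rmat n) (rmat_mult (kneser_vertices n) (kneser_rmat n) (kneser_poly n g))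
     = kneser_poly n ([:0, 1:] * g)"
proof -
  have "kneser_poly n [:0, 1:] = up_down (Suc (2 * n)) n"
    by (rule rmat_poly_X) (simp_all add: kneser_vertices_eq_level)
  then show ?thesis
    by (simp only: rmat_prod_assoc[symmetric] kneser_square kneser_mult_poly[symmetric])
qed

lemma rmat_supported_kneser_abs_sqrt [simp]:
  "rmat_supported (kneser_vertices n) (kneser_vertices n) (kneser_abs_sqrt n)"
  by (simp add: kneser_abs_sqrt_def)

lemma rmat_transpose_kneser_abs_sqrt [simp]: "rmat_transpose (kneser_abs_sqrt n) = kneser_abs_sqrt n"
  by (simp add: kneser_abs_sqrt_def rmat_transpose_kneser_poly)

lemma rmat_transpose_kneser_sign [simp]: "rmat_transpose (kneser_sign n) = kneser_sign n"
  by (simp add: kneser_sign_def rmat_transpose_prod rmat_transpose_kneser_poly kneser_commute_poly)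

lemma kneser_sign_square: "rmat_mult (kneser_vertices n) (kneser_sign n) (kneser_sign n) = rmat_id (kneser_vertices n)"
proof -
  let ?V = "kneser_vertices n" and ?T = "kneser_rmat n"
  let ?h = "lagrange_poly n (\<lambda>j. (real n + 1 - real j)\<^sup>2) (\<lambda>j. 1 / (real n + 1 - real j))"
  have "rmat_mult ?V (kneser_sign n) (kneser_sign n)
      = rmat_mult ?V ?T (rmat_mult ?V (rmat_mult ?V (kneser_poly n ?h) ?T) (kneser_poly n ?h))"
    by (simp add: kneser_sign_def rmat_prod_assoc)
  also have "\<dots> = rmat_mult ?V ?T (rmat_mult ?V ?T (kneser_poly n (?h * ?h)))"
    by (simp add: kneser_commute_poly[symmetric] rmat_prod_assoc kneser_mult_poly)
  also have "\<dots> = kneser_poly n 1"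
    unfolding kneser_square_mult_poly
    by (rule kneser_poly_eqI)
      (simp add: poly_lagrange_kneser, simp add: field_simps power2_eq_square)
  finally show ?thesis
    by (simp add: rmat_poly_1)
qed

lemma kneser_abs_sqrt_sign_factorization:
  "rmat_mult (kneser_vertices n) (kneser_abs_sqrt n) (rmat_mult (kneser_vertices n) (kneser_sign n) (kneser_abs_sqrt n))
     = kneser_rmat n"
proof -
  let ?V = "kneser_vertices n" and ?T = "kneser_rmat n" and ?Z = "kneser_abs_sqrt n"
  let ?h = "lagrange_poly n (\<lambda>j. (real n + 1 - real j)\<^sup>2) (\<lambda>j. 1 / (real n + 1 - real j))"
  let ?z = "lagrange_poly n (\<lambda>j. (real n + 1 - real j)\<^sup>2) (\<lambda>j. sqrt (real n + 1 - real j))"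
  have "rmat_mult ?V ?Z (rmat_mult ?V (kneser_sign n) ?Z)
      = rmat_mult ?V (rmat_mult ?V ?Z ?T) (rmat_mult ?V (kneser_poly n ?h) ?Z)"
    by (simp add: kneser_sign_def rmat_prod_assoc)
  also have "\<dots> = rmat_mult ?V ?T (kneser_poly n (?z * (?h * ?z)))"
    by (simp add: kneser_abs_sqrt_def kneser_commute_poly[symmetric] rmat_prod_assoc kneser_mult_poly)
  also have "kneser_poly n (?z * (?h * ?z)) = kneser_poly n 1"
    by (rule kneser_poly_eqI) (simp add: poly_lagrange_kneser)
  finally show ?thesis
    by (simp add: rmat_poly_1 rmat_prod_id_right)
qed

lemma kneser_sign_abs_sqrt_gram:
  "rmat_mult (kneser_vertices n) (rmat_transpose (rmat_mult (kneser_vertices n) (kneser_sign n) (kneser_abs_sqrt n)))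
      (rmat_mult (kneser_vertices n) (kneser_sign n) (kneser_abs_sqrt n))
     = rmat_mult (kneser_vertices n) (kneser_abs_sqrt n) (kneser_abs_sqrt n)"
  by (simp add: rmat_transpose_prod rmat_prod_assoc) (simp add: rmat_prod_assoc[symmetric] kneser_sign_square rmat_prod_id_left)

lemma rmat_trace_kneser_abs_sqrt_square:
  "rmat_trace (kneser_vertices n) (rmat_mult (kneser_vertices n) (kneser_abs_sqrt n) (kneser_abs_sqrt n)) = 2 ^ (2 * n)"
  unfolding kneser_abs_sqrt_def kneser_mult_poly
  by (rule rmat_trace_kneser_abs) (simp add: poly_lagrange_kneser)

lemma rmat_trace_kneser_sign:
  "rmat_trace (kneser_vertices n) (rmat_mult (kneser_vertices n) (kneser_rmat n) (kneser_sign n)) = 2 ^ (2 * n)"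
  unfolding kneser_sign_def kneser_square_mult_poly
  by (rule rmat_trace_kneser_abs)
    (simp add: poly_lagrange_kneser, simp add: field_simps power2_eq_square)

section \<open>Operator norms and Schur multipliers\<close>


definition of_rmat :: "'a rmat \<Rightarrow> 'a \<Rightarrow> 'a \<Rightarrow> complex" where
  "of_rmat M = (\<lambda>a b. complex_of_real (M a b))"

lemma vnorm_eq_L2_set: "vnorm I x = L2_set (\<lambda>i. cmod (x i)) I"
  by (simp add: vnorm_def L2_set_def)

lemma vnorm_nonneg [simp]: "0 \<le> vnorm I x"
  by (simp add: vnorm_eq_L2_set)

lemma vnorm_square: "(vnorm I x)\<^sup>2 = (\<Sum>i\<in>I. (cmod (x i))\<^sup>2)"
  by (simp add: vnorm_def sum_nonneg)

lemma vnorm_scale: "vnorm I (\<lambda>i. c * x i) = cmod c * vnorm I x"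
  by (simp add: vnorm_eq_L2_set norm_mult L2_set_right_distrib)

lemma vnorm_mat_apply_le: "vnorm I (mat_apply I R x) \<le> L2_set (\<lambda>i. L2_set (\<lambda>j. cmod (R i j)) I) I * vnorm I x"
proof -
  have "cmod (\<Sum>j\<in>I. R i j * x j) \<le> L2_set (\<lambda>j. cmod (R i j)) I * vnorm I x" for i
    unfolding vnorm_eq_L2_set
    by (rule order_trans[OF norm_sum]) (simp add: norm_mult order_trans[OF _ L2_set_mult_ineq])
  then have "vnorm I (mat_apply I R x) \<le> L2_set (\<lambda>i. L2_set (\<lambda>j. cmod (R i j)) I * vnorm I x) I"
    unfolding vnorm_eq_L2_set mat_apply_def by (intro L2_set_mono) auto
  then show ?thesis
    by (simp add: L2_set_left_distrib)
qed

lemma bdd_above_opnorm: "bdd_above {vnorm I (mat_apply I R x) | x. vnorm I x \<le> 1}"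
proof (rule bdd_aboveI)
  fix y
  assume "y \<in> {vnorm I (mat_apply I R x) | x. vnorm I x \<le> 1}"
  then obtain x where "y = vnorm I (mat_apply I R x)" "vnorm I x \<le> 1"
    by blast
  then show "y \<le> L2_set (\<lambda>i. L2_set (\<lambda>j. cmod (R i j)) I) I"
    using vnorm_mat_apply_le[of I R x] by (metis L2_set_nonneg mult_left_le order_trans)
qed

lemma opnorm_upper: "vnorm I x \<le> 1 \<Longrightarrow> vnorm I (mat_apply I R x) \<le> opnorm I R"
  unfolding opnorm_def by (rule cSup_upper) (auto intro: bdd_above_opnorm)

lemma opnorm_nonneg [simp]: "0 \<le> opnorm I R"
  using opnorm_upper[of I "\<lambda>i. 0" R] vnorm_nonneg[of I "mat_apply I R (\<lambda>i. 0)"]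
  by (simp add: vnorm_def mat_apply_def)

lemma opnorm_least:
  "0 \<le> c \<Longrightarrow> (\<And>x. vnorm I x \<le> 1 \<Longrightarrow> vnorm I (mat_apply I R x) \<le> c) \<Longrightarrow> opnorm I R \<le> c"
  unfolding opnorm_def by (rule cSup_least) (auto intro!: exI[of _ "\<lambda>i. 0"] simp: vnorm_def)

lemma vnorm_mat_apply_le_opnorm:
  assumes "finite I"
  shows "vnorm I (mat_apply I R x) \<le> opnorm I R * vnorm I x"
proof (cases "vnorm I x = 0")
  case True
  then have "\<forall>i\<in>I. x i = 0"
    using assms by (simp add: vnorm_eq_L2_set L2_set_eq_0_iff)
  then show ?thesis
    using True by (simp add: vnorm_def mat_apply_def)
next
  case False
  let ?t = "vnorm I x"
  have t: "0 < ?t"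
    using False vnorm_nonneg[of I x] by linarith
  have scale: "mat_apply I R (\<lambda>i. c * x i) = (\<lambda>i. c * mat_apply I R x i)" for c
    by (simp add: mat_apply_def sum_distrib_left algebra_simps)
  have "vnorm I (mat_apply I R (\<lambda>i. complex_of_real (1 / ?t) * x i)) \<le> opnorm I R"
    by (rule opnorm_upper) (unfold vnorm_scale norm_of_real, use t in simp)
  then have "\<bar>1 / ?t\<bar> * vnorm I (mat_apply I R x) \<le> opnorm I R"
    unfolding scale vnorm_scale norm_of_real .
  then show ?thesis
    using t by (simp add: field_simps)
qed

text \<open>If \<open>T = Z W\<close> where the rows of \<open>Z\<close> and the columns of \<open>W\<close> have squared norm at most \<open>c\<close>,
  then \<open>T\<close> is a Schur multiplier of norm at most \<open>c\<close>: writing \<open>(T \<circ> R) x = \<Sum>\<^sub>k Z\<^sub>k (R (W\<^sub>k x))\<close>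
  with diagonal \<open>Z\<^sub>k\<close>, \<open>W\<^sub>k\<close>, apply Cauchy-Schwarz in \<open>k\<close>.\<close>

lemma opnorm_schur_le:
  fixes Z W :: "'a rmat"
  assumes "finite I" "0 \<le> c"
    and fact: "\<And>a b. a \<in> I \<Longrightarrow> b \<in> I \<Longrightarrow> T a b = complex_of_real (\<Sum>k\<in>I. Z a k * W k b)"
    and rows: "\<And>a. a \<in> I \<Longrightarrow> (\<Sum>k\<in>I. (Z a k)\<^sup>2) \<le> c"
    and cols: "\<And>b. b \<in> I \<Longrightarrow> (\<Sum>k\<in>I. (W k b)\<^sup>2) \<le> c"
  shows "opnorm I (schur T R) \<le> c * opnorm I R"
proof (rule opnorm_least)
  fix x
  assume x: "vnorm I x \<le> 1"
  define u where "u k = mat_apply I R (\<lambda>b. complex_of_real (W k b) * x b)" for k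
  let ?y = "mat_apply I (schur T R) x"
  have y: "?y a = (\<Sum>k\<in>I. complex_of_real (Z a k) * u k a)" if "a \<in> I" for a
  proof -
    have "?y a = (\<Sum>b\<in>I. \<Sum>k\<in>I. complex_of_real (Z a k) * (R a b * (complex_of_real (W k b) * x b)))"
      unfolding mat_apply_def schur_def
      by (intro sum.cong refl) (simp add: fact that sum_distrib_left sum_distrib_right mult_ac)
    then show ?thesis
      unfolding u_def mat_apply_def by (subst (asm) sum.swap) (simp add: sum_distrib_left)
  qed
  have row: "(cmod (?y a))\<^sup>2 \<le> (\<Sum>k\<in>I. (Z a k)\<^sup>2) * (\<Sum>k\<in>I. (cmod (u k a))\<^sup>2)" if "a \<in> I" for a
  proof -
    have "cmod (?y a) \<le> (\<Sum>k\<in>I. \<bar>Z a k\<bar> * cmod (u k a))"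
      unfolding y[OF that] by (rule order_trans[OF norm_sum]) (simp add: norm_mult)
    then have "(cmod (?y a))\<^sup>2 \<le> (\<Sum>k\<in>I. \<bar>Z a k\<bar> * cmod (u k a))\<^sup>2"
      by (rule power_mono) simp
    also have "\<dots> \<le> (\<Sum>k\<in>I. \<bar>Z a k\<bar>\<^sup>2) * (\<Sum>k\<in>I. (cmod (u k a))\<^sup>2)"
      by (rule Cauchy_Schwarz_ineq_sum)
    finally show ?thesis
      by simp
  qed
  have swap: "(\<Sum>k\<in>I. \<Sum>b\<in>I. (W k b)\<^sup>2 * (cmod (x b))\<^sup>2) = (\<Sum>b\<in>I. (\<Sum>k\<in>I. (W k b)\<^sup>2) * (cmod (x b))\<^sup>2)"
    by (subst sum.swap) (simp add: sum_distrib_right)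
  from row have "(vnorm I ?y)\<^sup>2 \<le> (\<Sum>a\<in>I. c * (\<Sum>k\<in>I. (cmod (u k a))\<^sup>2))"
    unfolding vnorm_square using rows
    by (intro sum_mono) (meson mult_right_mono order_trans sum_nonneg zero_le_power2)
  also have "\<dots> = c * (\<Sum>k\<in>I. (vnorm I (u k))\<^sup>2)"
    unfolding vnorm_square sum_distrib_left[symmetric] by (subst sum.swap) (rule refl)
  also have "\<dots> \<le> c * (\<Sum>k\<in>I. (opnorm I R)\<^sup>2 * (\<Sum>b\<in>I. (W k b)\<^sup>2 * (cmod (x b))\<^sup>2))"
  proof (intro mult_left_mono sum_mono assms(2))
    fix k
    have "vnorm I (u k) \<le> opnorm I R * vnorm I (\<lambda>b. complex_of_real (W k b) * x b)"
      unfolding u_def by (rule vnorm_mat_apply_le_opnorm[OF assms(1)])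
    then have "(vnorm I (u k))\<^sup>2 \<le> (opnorm I R * vnorm I (\<lambda>b. complex_of_real (W k b) * x b))\<^sup>2"
      by (rule power_mono) simp
    then show "(vnorm I (u k))\<^sup>2 \<le> (opnorm I R)\<^sup>2 * (\<Sum>b\<in>I. (W k b)\<^sup>2 * (cmod (x b))\<^sup>2)"
      by (simp add: power_mult_distrib vnorm_square norm_mult)
  qed
  also have "\<dots> = c * (opnorm I R)\<^sup>2 * (\<Sum>b\<in>I. (\<Sum>k\<in>I. (W k b)\<^sup>2) * (cmod (x b))\<^sup>2)"
    using swap by (simp add: sum_distrib_left[symmetric] mult.assoc)
  also have "\<dots> \<le> c * (opnorm I R)\<^sup>2 * (\<Sum>b\<in>I. c * (cmod (x b))\<^sup>2)"
    using cols assms(2) by (intro mult_left_mono sum_mono mult_right_mono) auto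
  also have "\<dots> = (c * opnorm I R)\<^sup>2 * (vnorm I x)\<^sup>2"
    unfolding vnorm_square sum_distrib_left[symmetric] by (simp add: power2_eq_square mult_ac)
  also have "\<dots> \<le> (c * opnorm I R)\<^sup>2"
    using x by (simp add: power_le_one mult_left_le)
  finally show "vnorm I ?y \<le> c * opnorm I R"
    by (rule power2_le_imp_le) (use assms(2) in simp)
qed (use assms(2) in simp)

lemma opnorm_symmetric_involution_le_1:
  assumes "finite I" "rmat_transpose S = S" "rmat_mult I S S = rmat_id I"
  shows "opnorm I (of_rmat S) \<le> 1"
proof (rule opnorm_least)
  fix x :: "'a \<Rightarrow> complex"
  assume x: "vnorm I x \<le> 1"
  have orth: "(\<Sum>a\<in>I. S a b * S a b') = (if b = b' then 1 else 0)" if "b \<in> I" "b' \<in> I" for b b'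
  proof -
    have "S a b = S b a" for a
      using fun_cong[OF fun_cong[OF assms(2)], of b a] by (simp add: rmat_transpose_def)
    then have "(\<Sum>a\<in>I. S a b * S a b') = rmat_mult I S S b b'"
      using that by (simp add: rmat_prod_def)
    then show ?thesis
      using that by (simp add: assms(3) rmat_id_def)
  qed
  let ?y = "mat_apply I (of_rmat S) x"
  have "complex_of_real ((vnorm I ?y)\<^sup>2) = (\<Sum>a\<in>I. ?y a * cnj (?y a))"
    by (simp only: vnorm_square of_real_sum complex_norm_square)
  also have "\<dots> = (\<Sum>a\<in>I. \<Sum>b\<in>I. \<Sum>b'\<in>I. of_real (S a b * S a b') * (x b * cnj (x b')))"
    by (simp add: mat_apply_def of_rmat_def cnj_sum sum_product mult_ac)
  also have "\<dots> = (\<Sum>b\<in>I. \<Sum>b'\<in>I. \<Sum>a\<in>I. of_real (S a b * S a b') * (x b * cnj (x b')))"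
    by (subst sum.swap) (rule sum.cong[OF refl], rule sum.swap)
  also have "\<dots> = (\<Sum>b\<in>I. \<Sum>b'\<in>I. of_real (\<Sum>a\<in>I. S a b * S a b') * (x b * cnj (x b')))"
    by (simp add: of_real_sum sum_distrib_right)
  also have "\<dots> = (\<Sum>b\<in>I. \<Sum>b'\<in>I. if b' = b then x b * cnj (x b') else 0)"
    by (intro sum.cong refl) (auto simp: orth)
  also have "\<dots> = (\<Sum>b\<in>I. x b * cnj (x b))"
    using assms(1) by simp
  also have "\<dots> = complex_of_real ((vnorm I x)\<^sup>2)"
    by (simp only: vnorm_square of_real_sum complex_norm_square)
  finally have "(vnorm I ?y)\<^sup>2 = (vnorm I x)\<^sup>2"
    by (simp only: of_real_eq_iff)
  then have "vnorm I ?y = vnorm I x"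
    by (simp add: power2_eq_iff_nonneg)
  then show "vnorm I ?y \<le> 1"
    using x by simp
qed simp

lemma norm_sum_le_vnorm: "cmod (\<Sum>a\<in>I. x a) \<le> sqrt (real (card I)) * vnorm I x"
proof -
  have "cmod (\<Sum>a\<in>I. x a) \<le> (\<Sum>a\<in>I. \<bar>cmod (x a)\<bar> * \<bar>1\<bar>)"
    by (rule order_trans[OF norm_sum]) simp
  also have "\<dots> \<le> vnorm I x * L2_set (\<lambda>a. 1) I"
    unfolding vnorm_eq_L2_set by (rule L2_set_mult_ineq)
  finally show ?thesis
    by (simp add: L2_set_constant mult.commute)
qed

lemma sum_entries_le_opnorm:
  assumes "finite I"
  shows "cmod (\<Sum>a\<in>I. \<Sum>b\<in>I. M a b) \<le> real (card I) * opnorm I M"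
proof (cases "I = {}")
  case False
  let ?N = "real (card I)"
  have N: "0 < ?N"
    using assms False by (simp add: card_gt_0_iff)
  define x where "x = (\<lambda>a::'a. complex_of_real (1 / sqrt ?N))"
  have "vnorm I x = 1"
    using N by (simp add: x_def vnorm_eq_L2_set L2_set_constant norm_divide)
  then have y: "vnorm I (mat_apply I M x) \<le> opnorm I M"
    by (intro opnorm_upper) simp
  have "(\<Sum>a\<in>I. \<Sum>b\<in>I. M a b) = complex_of_real (sqrt ?N) * (\<Sum>a\<in>I. mat_apply I M x a)"
    using N by (simp add: x_def mat_apply_def sum_distrib_left sum_distrib_right)
  then have "cmod (\<Sum>a\<in>I. \<Sum>b\<in>I. M a b) \<le> sqrt ?N * (sqrt ?N * vnorm I (mat_apply I M x))"
    using norm_sum_le_vnorm[of "mat_apply I M x" I] by (simp add: norm_mult mult_left_mono)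
  also have "\<dots> \<le> ?N * opnorm I M"
    using y N by (simp add: mult.assoc[symmetric] mult_left_mono)
  finally show ?thesis .
qed simp

section \<open>Invariance under the symmetric group\<close>

definition rmat_invariant :: "('a \<Rightarrow> 'a) \<Rightarrow> 'a rmat \<Rightarrow> bool" where
  "rmat_invariant g M \<longleftrightarrow> (\<forall>a b. M (g a) (g b) = M a b)"

lemma mem_iff_image_mem: "inj g \<Longrightarrow> g ` I = I \<Longrightarrow> g a \<in> I \<longleftrightarrow> a \<in> I"
  by (metis inj_image_mem_iff)

lemma rmat_invariant_id:
  assumes "inj g" "g ` I = I"
  shows "rmat_invariant g (rmat_id I)"
  using assms by (auto simp: rmat_invariant_def rmat_id_def inj_eq mem_iff_image_mem)

lemma rmat_invariant_mult:
  assumes "inj g" "g ` I = I" "rmat_invariant g M" "rmat_invariant g N"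
  shows "rmat_invariant g (rmat_mult I M N)"
  unfolding rmat_invariant_def
proof (intro allI)
  fix a b
  have "(\<Sum>c\<in>I. M (g a) c * N c (g b)) = (\<Sum>c\<in>g ` I. M (g a) c * N c (g b))"
    using assms(2) by simp
  also have "\<dots> = (\<Sum>c\<in>I. M (g a) (g c) * N (g c) (g b))"
    using assms(1) by (subst sum.reindex) (auto intro: inj_on_subset)
  also have "\<dots> = (\<Sum>c\<in>I. M a c * N c b)"
    using assms(3,4) by (simp add: rmat_invariant_def)
  finally show "rmat_mult I M N (g a) (g b) = rmat_mult I M N a b"
    using assms(1,2) by (simp add: rmat_prod_def mem_iff_image_mem)
qed

lemma rmat_invariant_poly:
  assumes "inj g" "g ` I = I" "rmat_invariant g M"
  shows "rmat_invariant g (rmat_poly I f M)"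
proof (induct f)
  case 0
  then show ?case
    by (simp add: rmat_invariant_def rmat_zero_def)
next
  case (pCons a f)
  then show ?case
    using rmat_invariant_id[OF assms(1,2)] rmat_invariant_mult[OF assms(1,2,3) pCons(2)]
    by (simp add: rmat_poly_pCons rmat_invariant_def rmat_add_def rmat_scale_def)
qed

lemma inj_image_permutes: "s permutes S \<Longrightarrow> inj ((`) s)"
  by (rule injI) (metis permutes_inj inj_image_eq_iff)

lemma image_permutes_kneser_vertices:
  assumes "s permutes {1..2 * n + 1}"
  shows "(`) s ` kneser_vertices n = kneser_vertices n"
proof -
  have into: "t ` A \<in> kneser_vertices n" if "t permutes {1..2 * n + 1}" "A \<in> kneser_vertices n" for t A
  proof -
    have "t ` A \<subseteq> {1..2 * n + 1}"
      using that permutes_image[OF that(1)] by (auto simp: kneser_vertices_def)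
    moreover have "card (t ` A) = card A"
      using permutes_inj[OF that(1)] by (simp add: card_image inj_on_subset)
    ultimately show ?thesis
      using that(2) by (simp add: kneser_vertices_def)
  qed
  have "A \<in> (`) s ` kneser_vertices n" if "A \<in> kneser_vertices n" for A
  proof
    show "A = s ` (inv s ` A)"
      using permutes_surj[OF assms] by (simp add: image_f_inv_f)
    show "inv s ` A \<in> kneser_vertices n"
      using into[OF permutes_inv[OF assms] that] .
  qed
  then show ?thesis
    using into[OF assms] by blast
qed

lemma ex_permutes_image_eq:
  assumes "finite S" "A \<subseteq> S" "B \<subseteq> S" "card A = card B"
  shows "\<exists>s. s permutes S \<and> s ` A = B"
proof -
  have "finite A" "finite B"
    using assms finite_subset by blast+
  then obtain f where f: "bij_betw f A B"
    using assms(4) finite_same_card_bij by blast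
  have "card (S - A) = card (S - B)"
    using assms by (simp add: card_Diff_subset finite_subset)
  then obtain g where g: "bij_betw g (S - A) (S - B)"
    using assms(1) finite_same_card_bij by blast
  define s where "s x = (if x \<in> A then f x else if x \<in> S then g x else x)" for x
  have "bij_betw s A B"
    using f by (rule bij_betw_cong[THEN iffD1, rotated]) (simp add: s_def)
  moreover have "bij_betw s (S - A) (S - B)"
    using g by (rule bij_betw_cong[THEN iffD1, rotated]) (simp add: s_def)
  ultimately have "bij_betw s (A \<union> (S - A)) (B \<union> (S - B))"
    by (rule bij_betw_combine) auto
  then have "bij_betw s S S"
    using assms(2,3) by (simp add: Un_absorb1 Un_Diff_cancel)
  then have "s permutes S"
    by (rule bij_imp_permutes) (use assms(2) in \<open>auto simp: s_def\<close>)
  moreover have "s ` A = B"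
    using \<open>bij_betw s A B\<close> by (simp add: bij_betw_def)
  ultimately show ?thesis
    by blast
qed

lemma rmat_diag_eq_trace_div_card:
  assumes "finite I" "a \<in> I" "\<And>b. b \<in> I \<Longrightarrow> \<exists>g. rmat_invariant g M \<and> g b = a"
  shows "M a a = rmat_trace I M / real (card I)"
proof -
  have "M b b = M a a" if "b \<in> I" for b
    using assms(3)[OF that] by (auto simp: rmat_invariant_def)
  then have "rmat_trace I M = real (card I) * M a a"
    by (simp add: rmat_trace_def)
  moreover have "card I \<noteq> 0"
    using assms(1,2) by auto
  ultimately show ?thesis
    by simp
qed

lemma rmat_invariant_kneser:
  assumes "s permutes {1..2 * n + 1}"
  shows "rmat_invariant ((`) s) (kneser_rmat n)"
proof -
  have "s ` A \<inter> s ` B = s ` (A \<inter> B)" for A B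
    using permutes_inj[OF assms] by (simp add: image_Int)
  then show ?thesis
    using mem_iff_image_mem[OF inj_image_permutes[OF assms] image_permutes_kneser_vertices[OF assms]]
    by (simp add: rmat_invariant_def kneser_rmat_def)
qed

lemma rmat_invariant_kneser_poly:
  assumes "s permutes {1..2 * n + 1}"
  shows "rmat_invariant ((`) s) (kneser_poly n f)"
proof -
  note inv = inj_image_permutes[OF assms] image_permutes_kneser_vertices[OF assms]
  have "rmat_invariant ((`) s) (up_down (Suc (2 * n)) n)"
    unfolding kneser_square[symmetric]
    by (rule rmat_invariant_mult[OF inv rmat_invariant_kneser[OF assms] rmat_invariant_kneser[OF assms]])
  then show ?thesis
    by (rule rmat_invariant_poly[OF inv])
qed

lemma rmat_invariant_kneser_sign:
  assumes "s permutes {1..2 * n + 1}"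
  shows "rmat_invariant ((`) s) (kneser_sign n)"
  unfolding kneser_sign_def
  by (rule rmat_invariant_mult[OF inj_image_permutes[OF assms] image_permutes_kneser_vertices[OF assms]
        rmat_invariant_kneser[OF assms] rmat_invariant_kneser_poly[OF assms]])

lemma kneser_abs_sqrt_square_diag:
  assumes A: "A \<in> kneser_vertices n"
  shows "rmat_mult (kneser_vertices n) (kneser_abs_sqrt n) (kneser_abs_sqrt n) A A
    = 2 ^ (2 * n) / real ((2 * n + 1) choose n)"
proof -
  let ?V = "kneser_vertices n"
  have "rmat_mult ?V (kneser_abs_sqrt n) (kneser_abs_sqrt n) A A
      = rmat_trace ?V (rmat_mult ?V (kneser_abs_sqrt n) (kneser_abs_sqrt n)) / real (card ?V)"
  proof (rule rmat_diag_eq_trace_div_card[OF finite_kneser_vertices A])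
    fix B
    assume "B \<in> ?V"
    then have "B \<subseteq> {1..2 * n + 1}" "A \<subseteq> {1..2 * n + 1}" "card B = card A"
      using A by (simp_all add: kneser_vertices_def)
    then obtain s where s: "s permutes {1..2 * n + 1}" "s ` B = A"
      using ex_permutes_image_eq[of "{1..2 * n + 1}" B A] by blast
    note inv = inj_image_permutes[OF s(1)] image_permutes_kneser_vertices[OF s(1)]
    have "rmat_invariant ((`) s) (rmat_mult ?V (kneser_abs_sqrt n) (kneser_abs_sqrt n))"
      unfolding kneser_abs_sqrt_def using rmat_invariant_kneser_poly[OF s(1)] by (intro rmat_invariant_mult[OF inv])
    then show "\<exists>g. rmat_invariant g (rmat_mult ?V (kneser_abs_sqrt n) (kneser_abs_sqrt n)) \<and> g B = A"
      using s(2) by blast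
  qed
  then show ?thesis
    by (simp add: rmat_trace_kneser_abs_sqrt_square card_kneser_vertices)
qed

lemma of_rmat_mem_kneser_commutant:
  assumes "\<And>s. s permutes {1..2 * n + 1} \<Longrightarrow> rmat_invariant ((`) s) M"
  shows "of_rmat M \<in> kneser_commutant n"
  unfolding kneser_commutant_def
proof (intro CollectI allI impI ballI)
  fix s A B
  assume s: "s permutes {1..2 * n + 1}" and A: "A \<in> kneser_vertices n" and B: "B \<in> kneser_vertices n"
  let ?V = "kneser_vertices n"
  have bij: "bij_betw ((`) s) ?V ?V"
    using bij_betw_imageI[OF inj_on_subset[OF inj_image_permutes[OF s] subset_UNIV]
        image_permutes_kneser_vertices[OF s]] .
  have "mat_mult ?V (perm_mat s) (of_rmat M) A B
      = (\<Sum>C\<in>?V. (if A = s ` C then 1 else 0) * of_rmat M (s ` C) (s ` B))"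
    unfolding mat_mult_def perm_mat_def using assms[OF s] by (simp add: of_rmat_def rmat_invariant_def)
  also have "\<dots> = (\<Sum>D\<in>?V. (if A = D then 1 else 0) * of_rmat M D (s ` B))"
    by (rule sum.reindex_bij_betw[OF bij])
  also have "\<dots> = of_rmat M A (s ` B)"
    using A by (simp add: if_distrib[of "\<lambda>t. t * _"] cong: if_cong)
  also have "\<dots> = mat_mult ?V (of_rmat M) (perm_mat s) A B"
    using bij_betw_apply[OF bij B]
    by (simp add: mat_mult_def perm_mat_def if_distrib[of "\<lambda>t. _ * t"] cong: if_cong)
  finally show "mat_mult ?V (perm_mat s) (of_rmat M) A B = mat_mult ?V (of_rmat M) (perm_mat s) A B" .
qed

lemma kneser_adj_eq_kneser_rmat:
  "A \<in> kneser_vertices n \<Longrightarrow> B \<in> kneser_vertices n \<Longrightarrow> kneser_adj A B = complex_of_real (kneser_rmat n A B)"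
  by (simp add: kneser_adj_def kneser_rmat_def)

lemma opnorm_schur_kneser_le:
  "opnorm (kneser_vertices n) (schur kneser_adj R)
     \<le> 2 ^ (2 * n) / real ((2 * n + 1) choose n) * opnorm (kneser_vertices n) R"
proof -
  let ?V = "kneser_vertices n" and ?Z = "kneser_abs_sqrt n"
  let ?W = "rmat_mult ?V (kneser_sign n) ?Z"
  have entry: "(\<Sum>C\<in>?V. M A C * N C B) = rmat_mult ?V M N A B" if "A \<in> ?V" "B \<in> ?V" for M N A B
    using that by (simp add: rmat_prod_def)
  show ?thesis
  proof (rule opnorm_schur_le[where Z = ?Z and W = ?W])
    fix A B
    assume "A \<in> ?V" "B \<in> ?V"
    then show "kneser_adj A B = complex_of_real (\<Sum>C\<in>?V. ?Z A C * ?W C B)"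
      by (simp add: entry kneser_abs_sqrt_sign_factorization kneser_adj_eq_kneser_rmat)
  next
    fix A
    assume "A \<in> ?V"
    then show "(\<Sum>C\<in>?V. (?Z A C)\<^sup>2) \<le> 2 ^ (2 * n) / real ((2 * n + 1) choose n)"
      by (simp add: sum_square_row kneser_abs_sqrt_square_diag)
  next
    fix B
    assume "B \<in> ?V"
    then show "(\<Sum>C\<in>?V. (?W C B)\<^sup>2) \<le> 2 ^ (2 * n) / real ((2 * n + 1) choose n)"
      by (simp add: sum_square_column kneser_sign_abs_sqrt_gram kneser_abs_sqrt_square_diag)
  qed simp_all
qed

lemma opnorm_schur_kneser_sign_ge:
  "2 ^ (2 * n) / real ((2 * n + 1) choose n)
     \<le> opnorm (kneser_vertices n) (schur kneser_adj (of_rmat (kneser_sign n)))"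
proof -
  let ?V = "kneser_vertices n"
  have "(\<Sum>A\<in>?V. \<Sum>B\<in>?V. schur kneser_adj (of_rmat (kneser_sign n)) A B)
      = complex_of_real (rmat_trace ?V (rmat_mult ?V (kneser_rmat n) (kneser_sign n)))"
    using fun_cong[OF fun_cong[OF rmat_transpose_kneser_sign]]
    by (simp add: schur_def of_rmat_def kneser_adj_eq_kneser_rmat rmat_trace_def rmat_prod_def
        rmat_transpose_def cong: sum.cong)
  then have "2 ^ (2 * n) \<le> real (card ?V) * opnorm ?V (schur kneser_adj (of_rmat (kneser_sign n)))"
    using sum_entries_le_opnorm[OF finite_kneser_vertices[of n],
        where M = "schur kneser_adj (of_rmat (kneser_sign n))"]
    by (simp add: rmat_trace_kneser_sign norm_power)
  then show ?thesis
    by (simp add: card_kneser_vertices divide_le_eq mult.commute)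
qed

lemma schur_norm_on_kneser:
  assumes "of_rmat (kneser_sign n) \<in> Sub"
  shows "schur_norm_on (kneser_vertices n) kneser_adj Sub = 2 ^ (2 * n) / real ((2 * n + 1) choose n)"
proof -
  let ?V = "kneser_vertices n" and ?c = "2 ^ (2 * n) / real ((2 * n + 1) choose n) :: real"
  let ?X = "{opnorm ?V (schur kneser_adj R) |R. R \<in> Sub \<and> opnorm ?V R \<le> 1}"
  have le: "opnorm ?V (schur kneser_adj R) \<le> ?c" if "opnorm ?V R \<le> 1" for R
    using opnorm_schur_kneser_le[of n R] mult_left_le[OF that, of ?c] by simp
  have "opnorm ?V (of_rmat (kneser_sign n)) \<le> 1"
    by (rule opnorm_symmetric_involution_le_1) (simp_all add: kneser_sign_square)
  then have "?c \<in> ?X"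
    using assms le opnorm_schur_kneser_sign_ge[of n] by (blast intro: antisym)
  moreover have "v \<le> ?c" if "v \<in> ?X" for v
    using that le by blast
  ultimately show ?thesis
    unfolding schur_norm_on_def by (rule cSup_eq_maximum)
qed

section \<open>The closed form of the norm\<close>

lemma prod_even_numbers: "(\<Prod>i=1..n. real (2 * i + 2)) = 2 ^ n * fact (n + 1)"
  by (induct n) (simp_all add: prod.nat_ivl_Suc' algebra_simps)

lemma prod_odd_numbers: "(\<Prod>i=1..n. real (2 * i + 1)) * 2 ^ n * fact n = fact (2 * n + 1)"
proof (induct n)
  case (Suc n)
  have "(\<Prod>i=1..Suc n. real (2 * i + 1)) * 2 ^ Suc n * fact (Suc n)
      = ((\<Prod>i=1..n. real (2 * i + 1)) * 2 ^ n * fact n) * (real (2 * n + 3) * 2 * real (Suc n))"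
    by (simp add: prod.nat_ivl_Suc' algebra_simps)
  also have "\<dots> = fact (2 * n + 1) * (real (2 * n + 3) * real (2 * n + 2))"
    using Suc by (simp add: algebra_simps)
  also have "\<dots> = fact (2 * Suc n + 1)"
    by (simp add: algebra_simps)
  finally show ?case .
qed simp

lemma central_binomial_ratio_eq_prod_ratio:
  "2 ^ (2 * n) / real ((2 * n + 1) choose n) = (\<Prod>i=1..n. real (2 * i + 2)) / (\<Prod>i=1..n. real (2 * i + 1))"
proof -
  have binom: "real ((2 * n + 1) choose n) = fact (2 * n + 1) / (fact n * fact (n + 1))"
    by (subst binomial_fact) auto
  have odd: "(\<Prod>i=1..n. real (2 * i + 1)) = fact (2 * n + 1) / (2 ^ n * fact n)"
    using prod_odd_numbers[of n] by (simp add: field_simps)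
  have "(2::real) ^ (2 * n) = 2 ^ n * 2 ^ n"
    by (simp add: power_add[symmetric] mult_2)
  then show ?thesis
    unfolding binom odd prod_even_numbers by (simp add: field_simps)
qed

lemma prod_ratio_eq_prod_one_plus:
  "(\<Prod>i=1..n. real (2 * i + 2)) / (\<Prod>i=1..n. real (2 * i + 1)) = (\<Prod>i=1..n. 1 + 1 / real (2 * i + 1))"
  unfolding prod_dividef[symmetric] by (intro prod.cong refl) (simp add: field_simps)

lemma prod_one_plus_square_ge: "(2 * real n + 3) / 3 \<le> (\<Prod>i=1..n. 1 + 1 / real (2 * i + 1))\<^sup>2"
proof (induct n)
  case (Suc n)
  let ?P = "\<Prod>i=1..n. 1 + 1 / real (2 * i + 1)" and ?d = "2 * real n + 3"
  have sq: "(1 + 1 / x)\<^sup>2 = 1 + 2 / x + (1 / x)\<^sup>2" if "x \<noteq> 0" for x :: real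
    using that by (simp add: power2_eq_square field_simps)
  have m: "real (2 * Suc n + 1) = ?d"
    by simp
  have e: "(1 + 1 / ?d)\<^sup>2 = 1 + 2 / ?d + (1 / ?d)\<^sup>2"
    by (rule sq) simp
  have step: "1 + 2 / ?d \<le> (1 + 1 / real (2 * Suc n + 1))\<^sup>2"
    unfolding m e by simp
  have "(2 * real (Suc n) + 3) / 3 = ?d / 3 * (1 + 2 / ?d)"
    by (simp add: field_simps)
  also have "\<dots> \<le> ?P\<^sup>2 * (1 + 1 / real (2 * Suc n + 1))\<^sup>2"
    by (rule mult_mono[OF Suc step]) (auto simp: field_simps)
  also have "\<dots> = (\<Prod>i=1..Suc n. 1 + 1 / real (2 * i + 1))\<^sup>2"
    by (simp add: prod.nat_ivl_Suc' power_mult_distrib)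
  finally show ?case .
qed simp

lemma ln_3_lt_2: "ln (3::real) < 2"
proof -
  have "(2::real) \<le> exp 1"
    using exp_ge_add_one_self[of 1] by simp
  then have "(4::real) \<le> exp 2"
    using mult_mono[of 2 "exp 1" 2 "exp (1::real)"] by (simp add: exp_add[symmetric])
  then have "(3::real) < exp 2"
    by simp
  then show ?thesis
    by (metis exp_less_cancel_iff exp_ln zero_less_numeral)
qed

text \<open>Apply \<open>ln x \<le> x - 1\<close> at \<open>x = sqrt ((2 n + 3) / 3)\<close>.\<close>

lemma ln_lt_prod_one_plus: "ln (real (2 * n + 3)) / 2 < (\<Prod>i=1..n. 1 + 1 / real (2 * i + 1))"
proof -
  let ?P = "\<Prod>i=1..n. 1 + 1 / real (2 * i + 1)" and ?x = "real (2 * n + 3)"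
  have "ln ?x / 2 = ln (sqrt ?x / sqrt 3) + ln (sqrt 3)"
    by (simp add: ln_sqrt ln_div)
  also have "\<dots> \<le> (sqrt ?x / sqrt 3 - 1) + ln 3 / 2"
    by (intro add_mono ln_le_minus_one) (auto simp: ln_sqrt)
  also have "\<dots> < sqrt (?x / 3)"
    using ln_3_lt_2 by (simp add: real_sqrt_divide)
  also have "\<dots> \<le> sqrt (?P\<^sup>2)"
    using prod_one_plus_square_ge[of n] by (intro real_sqrt_le_mono) (simp add: algebra_simps)
  also have "\<dots> = ?P"
    using prod_nonneg[of "{1..n}" "\<lambda>i. 1 + 1 / real (2 * i + 1)"] by simp
  finally show ?thesis .
qed

theorem theorem5p5:
  fixes n :: nat
  assumes "n \<ge> 1"
  shows "schur_norm (kneser_vertices n) kneser_adj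
           = schur_norm_on (kneser_vertices n) kneser_adj (kneser_commutant n)
       \<and> schur_norm_on (kneser_vertices n) kneser_adj (kneser_commutant n)
           = 2 ^ (2*n) / real ((2*n+1) choose n)
       \<and> 2 ^ (2*n) / real ((2*n+1) choose n)
           = (\<Prod>i=1..n. real (2*i+2)) / (\<Prod>i=1..n. real (2*i+1))
       \<and> (\<Prod>i=1..n. real (2*i+2)) / (\<Prod>i=1..n. real (2*i+1))
           = (\<Prod>i=1..n. 1 + 1 / real (2*i+1))
       \<and> (\<Prod>i=1..n. 1 + 1 / real (2*i+1)) > ln (real (2*n+3)) / 2"
proof -
  have sign_commutant: "of_rmat (kneser_sign n) \<in> kneser_commutant n"
    by (rule of_rmat_mem_kneser_commutant) (rule rmat_invariant_kneser_sign)
  show ?thesis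
    unfolding schur_norm_def
    using schur_norm_on_kneser[of n UNIV] schur_norm_on_kneser[OF sign_commutant]
      central_binomial_ratio_eq_prod_ratio[of n] prod_ratio_eq_prod_one_plus[of n] ln_lt_prod_one_plus[of n]
    by simp
qed

end
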